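(* Let $G$ be a tree on vertex set $[n]$, and let $\mathcal{G}$ be a DAG with skeleton $G$. Let $i$ be an internal (non-leaf) vertex of $G$ and let $T$ be a subtree of $G$. Let $\mathcal{G}'$ be the DAG on vertex set $[n+1]$ obtained from $\mathcal{G}$ by adding the vertex $n+1$ and the edge $i\to n+1$. Let $\mathcal{H}$ and $\mathcal{H}'$ be the directed graphs identical to $\mathcal{G}$ and $\mathcal{G}'$ respectively, except that the direction of every edge of $T$ is reversed. If $\{\mathcal{G},\mathcal{H}\}$ is an essential flip, then $\{\mathcal{G}',\mathcal{H}'\}$ is an essential flip.
   Context: DAG means directed acyclic graph; its skeleton is the undirected graph with the same adjacencies. A v-structure in a DAG is an induced subgraph $a\to b\leftarrow c$ with $a,c$ non-adjacent. Two DAGs are Markov equivalent iff they have the same skeleton and the same v-structures. An edge $a\to b$ of a DAG $\mathcal{D}$ is essential if $a\to b$ appears in every DAG Markov equivalent to $\mathcal{D}$; $a$ is then an essential parent of $b$. The essential graph of $\mathcal{D}$ is the partially directed graph on the skeleton of $\mathcal{D}$ in which essential edges are directed as in $\mathcal{D}$ and all other edges are undirected. The characteristic imset $c_\mathcal{D}$ of a DAG on $[n]$ is the 0/1-vector indexed by $S\subseteq[n]$, $|S|\ge 2$, with $c_\mathcal{D}(S)=1$ iff some $j\in S$ satisfies $S\subseteq \mathrm{pa}_\mathcal{D}(j)\cup\{j\}$. For DAGs $\mathcal{G},\mathcal{H}$ with common skeleton a tree $G$, let $N_j=\{S\cup\{j\}: S\subseteq \mathrm{ne}_G(j),\ |S|\ge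 2\}$ and $\Delta(\mathcal{G},\mathcal{H})=\{j: c_\mathcal{G}|_{N_j}\neq c_\mathcal{H}|_{N_j}\}$ (equivalently, the vertices at which one DAG has a v-structure the other does not). For a set $S$ of vertices of a tree, $\operatorname{span}(S)$ denotes the vertex set of the smallest subtree containing $S$. Two non-Markov-equivalent DAGs (or their essential graphs) $\mathcal{G},\mathcal{H}$ with common tree skeleton $G$ form an essential flip if, writing $\Delta=\Delta(\mathcal{G},\mathcal{H})$, the essential graphs of $\mathcal{G}$ and of $\mathcal{H}$ restricted to $\operatorname{span}(\Delta)$ contain no undirected edges, and every edge of $G|_{\operatorname{span}(\Delta)}$ is directed differently in the essential graphs of $\mathcal{G}$ and $\mathcal{H}$. *)

theory Defs
  imports Main
begin

text \<open>A directed graph is an edge relation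
  D :: (nat \<times> nat) set; (a,b) \<in> D means a \<rightarrow> b. An undirected graph is a
  symmetric irreflexive relation E.\<close>

definition dag :: "nat set \<Rightarrow> (nat \<times> nat) set \<Rightarrow> bool" where
  "dag V D \<longleftrightarrow> D \<subseteq> V \<times> V \<and> acyclic D"

definition skel :: "(nat \<times> nat) set \<Rightarrow> (nat \<times> nat) set" where
  "skel D = D \<union> D\<inverse>"

definition connected_on :: "nat set \<Rightarrow> (nat \<times> nat) set \<Rightarrow> bool" where
  "connected_on W E \<longleftrightarrow> (\<forall>u\<in>W. \<forall>v\<in>W. (u, v) \<in> (E \<inter> W \<times> W)\<^sup>*)"

text \<open>A tree: finite nonempty vertex set, symmetric irreflexive edge relation,
  connected, with exactly |V|-1 undirected edges.\<close>
definition is_tree :: "nat set \<Rightarrow> (nat \<times> nat) set \<Rightarrow> bool" where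
  "is_tree V E \<longleftrightarrow> finite V \<and> V \<noteq> {} \<and> E \<subseteq> V \<times> V \<and> sym E \<and> irrefl E \<and>
     connected_on V E \<and> card E = 2 * (card V - 1)"

definition is_subtree :: "nat set \<Rightarrow> (nat \<times> nat) set \<Rightarrow> nat set \<Rightarrow> bool" where
  "is_subtree V E W \<longleftrightarrow> W \<subseteq> V \<and> is_tree W (E \<inter> W \<times> W)"

definition vstructs :: "(nat \<times> nat) set \<Rightarrow> (nat \<times> nat \<times> nat) set" where
  "vstructs D = {(a, b, c). (a, b) \<in> D \<and> (c, b) \<in> D \<and> a \<noteq> c \<and> (a, c) \<notin> skel D}"

definition markov_equiv :: "(nat \<times> nat) set \<Rightarrow> (nat \<times> nat) set \<Rightarrow> bool" where
  "markov_equiv D D' \<longleftrightarrow> skel D = skel D' \<and> vstructs D = vstructs D'"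

text \<open>Essential edges of a DAG D on V: edges present in every Markov equivalent DAG on V.
  The essential graph has these directed and all other edges of D undirected.\<close>
definition essential :: "nat set \<Rightarrow> (nat \<times> nat) set \<Rightarrow> (nat \<times> nat) set" where
  "essential V D = {(a, b) \<in> D. \<forall>D'. dag V D' \<and> markov_equiv D D' \<longrightarrow> (a, b) \<in> D'}"

definition pa :: "(nat \<times> nat) set \<Rightarrow> nat \<Rightarrow> nat set" where
  "pa D j = {a. (a, j) \<in> D}"

definition ne :: "(nat \<times> nat) set \<Rightarrow> nat \<Rightarrow> nat set" where
  "ne E j = {a. (j, a) \<in> E}"

text \<open>Characteristic imset (value at S, meaningful for |S| \<ge> 2).\<close>
definition cim :: "(nat \<times> nat) set \<Rightarrow> nat set \<Rightarrow> bool" where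
  "cim D S \<longleftrightarrow> (\<exists>j\<in>S. S \<subseteq> pa D j \<union> {j})"

definition Delta :: "nat set \<Rightarrow> (nat \<times> nat) set \<Rightarrow> (nat \<times> nat) set \<Rightarrow> (nat \<times> nat) set \<Rightarrow> nat set" where
  "Delta V E D1 D2 = {j \<in> V. \<exists>S. S \<subseteq> ne E j \<and> card S \<ge> 2 \<and>
      cim D1 (insert j S) \<noteq> cim D2 (insert j S)}"

definition span :: "nat set \<Rightarrow> (nat \<times> nat) set \<Rightarrow> nat set \<Rightarrow> nat set" where
  "span V E S = \<Inter> {W. W \<subseteq> V \<and> S \<subseteq> W \<and> connected_on W E}"

definition essential_flip :: "nat set \<Rightarrow> (nat \<times> nat) set \<Rightarrow> (nat \<times> nat) set \<Rightarrow> (nat \<times> nat) set \<Rightarrow> bool" where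
  "essential_flip V E D1 D2 \<longleftrightarrow>
     is_tree V E \<and> dag V D1 \<and> dag V D2 \<and> skel D1 = E \<and> skel D2 = E \<and> \<not> markov_equiv D1 D2 \<and>
     (let S = span V E (Delta V E D1 D2) in
        (\<forall>a\<in>S. \<forall>b\<in>S. (a, b) \<in> D1 \<longrightarrow> (a, b) \<in> essential V D1) \<and>
        (\<forall>a\<in>S. \<forall>b\<in>S. (a, b) \<in> D2 \<longrightarrow> (a, b) \<in> essential V D2) \<and>
        (\<forall>a\<in>S. \<forall>b\<in>S. (a, b) \<in> E \<longrightarrow>
            ((a, b) \<in> essential V D1 \<longleftrightarrow> (a, b) \<notin> essential V D2)))"

definition reverse_on :: "nat set \<Rightarrow> (nat \<times> nat) set \<Rightarrow> (nat \<times> nat) set" where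
  "reverse_on W D = {(a, b) \<in> D. \<not> (a \<in> W \<and> b \<in> W)} \<union> {(b, a) | a b. (a, b) \<in> D \<and> a \<in> W \<and> b \<in> W}"

end

theory Submission
  imports Defs
begin

text \<open>Attaching a pendant edge \<open>i \<rightarrow> m\<close> at a new vertex \<open>m\<close> changes nothing on the old
  vertices: \<open>m\<close> has a single parent, so no new v-structure appears, and the DAGs Markov
  equivalent to the extension are exactly the extensions of DAGs Markov equivalent to the
  original, up to the orientation of the new edge. Hence the essential graphs agree on the old
  vertices, no new vertex enters \<open>\<Delta>\<close>, and the span of \<open>\<Delta>\<close> can only shrink, so the flip
  conditions are inherited from the larger old span. The argument works for any vertex \<open>i\<close>.\<close>

lemma skel_insert: "skel (insert (a, b) D) = skel D \<union> {(a, b), (b, a)}"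
  unfolding skel_def by auto

lemma skel_restrict: "skel (D \<inter> V \<times> V) = skel D \<inter> V \<times> V"
  unfolding skel_def by auto

lemma vstructs_restrict: "vstructs (D \<inter> V \<times> V) = vstructs D \<inter> V \<times> V \<times> V"
  unfolding vstructs_def skel_def by auto

lemma vstructs_insert_pendant:
  assumes "D \<subseteq> V \<times> V" "m \<notin> V" "i \<in> V"
  shows "vstructs (insert (i, m) D) = vstructs D"
  using assms unfolding vstructs_def skel_def by auto

lemma dag_insert_pendant:
  assumes "dag V D" "m \<notin> V" "i \<in> V"
  shows "dag (insert m V) (insert (i, m) D)"
proof -
  have "(m, i) \<notin> D\<^sup>*"
  proof
    assume "(m, i) \<in> D\<^sup>*"
    then show False
      using assms unfolding dag_def by (cases rule: converse_rtranclE) auto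
  qed
  then show ?thesis
    using assms unfolding dag_def by auto
qed

lemma markov_equiv_insert_pendant_iff:
  assumes "D1 \<subseteq> V \<times> V" "D2 \<subseteq> V \<times> V" "m \<notin> V" "i \<in> V"
  shows "markov_equiv (insert (i, m) D1) (insert (i, m) D2) \<longleftrightarrow> markov_equiv D1 D2"
proof -
  have "(i, m) \<notin> skel D1 \<union> skel D2" "(m, i) \<notin> skel D1 \<union> skel D2"
    using assms unfolding skel_def by auto
  then have "skel D1 \<union> {(i, m), (m, i)} = skel D2 \<union> {(i, m), (m, i)} \<longleftrightarrow> skel D1 = skel D2"
    by blast
  then show ?thesis
    using assms by (simp add: markov_equiv_def skel_insert vstructs_insert_pendant)
qed

text \<open>The new edge may be reversed in \<open>D'\<close>, which is why we restrict rather than delete it.\<close>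

lemma markov_equiv_restrict_pendant:
  assumes D: "D \<subseteq> V \<times> V" and m: "m \<notin> V" and i: "i \<in> V"
    and equiv: "markov_equiv (insert (i, m) D) D'"
  shows "markov_equiv D (D' \<inter> V \<times> V)"
proof -
  have "skel (D' \<inter> V \<times> V) = (skel D \<union> {(i, m), (m, i)}) \<inter> V \<times> V"
    using equiv by (simp add: markov_equiv_def skel_restrict skel_insert)
  also have "\<dots> = skel D"
    using D m unfolding skel_def by auto
  finally have "skel (D' \<inter> V \<times> V) = skel D" .
  moreover have "vstructs (D' \<inter> V \<times> V) = vstructs D \<inter> V \<times> V \<times> V"
    using equiv vstructs_insert_pendant[OF D m i] by (simp add: markov_equiv_def vstructs_restrict)
  moreover have "vstructs D \<subseteq> V \<times> V \<times> V"
    using D unfolding vstructs_def by auto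
  ultimately show ?thesis
    unfolding markov_equiv_def by auto
qed

lemma essential_insert_pendant_iff:
  assumes D: "D \<subseteq> V \<times> V" and m: "m \<notin> V" and i: "i \<in> V" and ab: "a \<in> V" "b \<in> V"
  shows "(a, b) \<in> essential (insert m V) (insert (i, m) D) \<longleftrightarrow> (a, b) \<in> essential V D"
proof
  assume ess: "(a, b) \<in> essential (insert m V) (insert (i, m) D)"
  have "(a, b) \<in> D0" if "dag V D0" "markov_equiv D D0" for D0
  proof -
    have "D0 \<subseteq> V \<times> V"
      using \<open>dag V D0\<close> unfolding dag_def by auto
    then have "markov_equiv (insert (i, m) D) (insert (i, m) D0)"
      using markov_equiv_insert_pendant_iff[OF D _ m i] that by blast
    then have "(a, b) \<in> insert (i, m) D0"
      using ess dag_insert_pendant[OF \<open>dag V D0\<close> m i] unfolding essential_def by blast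
    then show ?thesis
      using ab m by auto
  qed
  then show "(a, b) \<in> essential V D"
    using ess ab m unfolding essential_def by auto
next
  assume ess: "(a, b) \<in> essential V D"
  have "(a, b) \<in> D'" if "dag (insert m V) D'" "markov_equiv (insert (i, m) D) D'" for D'
  proof -
    have "dag V (D' \<inter> V \<times> V)"
      using \<open>dag (insert m V) D'\<close> unfolding dag_def by (auto intro: acyclic_subset)
    then have "(a, b) \<in> D' \<inter> V \<times> V"
      using ess markov_equiv_restrict_pendant[OF D m i that(2)] unfolding essential_def by blast
    then show ?thesis
      by blast
  qed
  then show "(a, b) \<in> essential (insert m V) (insert (i, m) D)"
    using ess unfolding essential_def by auto
qed

lemma pa_insert_other: "k \<noteq> b \<Longrightarrow> pa (insert (a, b) D) k = pa D k"
  unfolding pa_def by auto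

lemma cim_insert_edge_notin:
  assumes "b \<notin> X"
  shows "cim (insert (a, b) D) X = cim D X"
proof -
  have "pa (insert (a, b) D) k = pa D k" if "k \<in> X" for k
    by (metis assms that pa_insert_other)
  then show ?thesis
    unfolding cim_def by auto
qed

text \<open>\<open>m\<close> is a sink whose only parent is \<open>i\<close>, so no set containing \<open>m\<close> and another vertex
  besides \<open>i\<close> is a family subset.\<close>

lemma not_cim_insert_pendant:
  assumes D: "D \<subseteq> V \<times> V" and m: "m \<notin> V" and i: "i \<in> V"
    and S: "m \<in> S" "i \<notin> S" "card S \<ge> 2"
  shows "\<not> cim (insert (i, m) D) (insert i S)"
proof
  assume "cim (insert (i, m) D) (insert i S)"
  then obtain k where k: "insert i S \<subseteq> pa (insert (i, m) D) k \<union> {k}"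
    unfolding cim_def by auto
  show False
  proof (cases "k = m")
    case True
    have "pa (insert (i, m) D) m = {i}"
      using D m i unfolding pa_def by auto
    then have "S \<subseteq> {m}"
      using k True S by auto
    then show False
      using S card_mono[of "{m}" S] by simp
  next
    case False
    then have "(m, k) \<in> insert (i, m) D"
      using k S unfolding pa_def by auto
    then show False
      using D m i by auto
  qed
qed

lemma Delta_insert_pendant_subset:
  assumes D1: "D1 \<subseteq> V \<times> V" and D2: "D2 \<subseteq> V \<times> V" and E: "E \<subseteq> V \<times> V" "irrefl E"
    and m: "m \<notin> V" and i: "i \<in> V"
  shows "Delta (insert m V) (E \<union> {(i, m), (m, i)}) (insert (i, m) D1) (insert (i, m) D2)
    \<subseteq> Delta V E D1 D2"
proof
  fix j
  assume "j \<in> Delta (insert m V) (E \<union> {(i, m), (m, i)}) (insert (i, m) D1) (insert (i, m) D2)"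
  then obtain S where j: "j \<in> insert m V"
    and S: "S \<subseteq> ne (E \<union> {(i, m), (m, i)}) j" "card S \<ge> 2"
    and differ: "cim (insert (i, m) D1) (insert j S) \<noteq> cim (insert (i, m) D2) (insert j S)"
    unfolding Delta_def by auto
  have "j \<noteq> m"
  proof
    assume "j = m"
    then have "S \<subseteq> {i}"
      using S E m unfolding ne_def by auto
    then show False
      using S card_mono[of "{i}" S] by simp
  qed
  have "m \<notin> S"
  proof
    assume "m \<in> S"
    then have "j = i"
      using S \<open>j \<noteq> m\<close> E m unfolding ne_def by auto
    then have "i \<notin> S"
      using S E m i unfolding ne_def irrefl_def by auto
    then show False
      using differ \<open>j = i\<close> S not_cim_insert_pendant[OF D1 m i \<open>m \<in> S\<close>]
        not_cim_insert_pendant[OF D2 m i \<open>m \<in> S\<close>] by auto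
  qed
  then have "S \<subseteq> ne E j"
    using S \<open>j \<noteq> m\<close> unfolding ne_def by auto
  then show "j \<in> Delta V E D1 D2"
    using j \<open>j \<noteq> m\<close> \<open>m \<notin> S\<close> S differ unfolding Delta_def by (auto simp: cim_insert_edge_notin)
qed

lemma span_insert_pendant_subset:
  assumes "m \<notin> V" "X \<subseteq> Y"
  shows "span (insert m V) (E \<union> {(i, m), (m, i)}) X \<subseteq> span V E Y"
  unfolding span_def
proof (rule Inter_anti_mono, rule subsetI)
  fix W
  assume "W \<in> {W. W \<subseteq> V \<and> Y \<subseteq> W \<and> connected_on W E}"
  moreover from this have "(E \<union> {(i, m), (m, i)}) \<inter> W \<times> W = E \<inter> W \<times> W"
    using assms by auto
  ultimately show "W \<in> {W. W \<subseteq> insert m V \<and> X \<subseteq> W \<and> connected_on W (E \<union> {(i, m), (m, i)})}"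
    using assms unfolding connected_on_def by auto
qed

lemma span_subset: "connected_on V E \<Longrightarrow> X \<subseteq> V \<Longrightarrow> span V E X \<subseteq> V"
  unfolding span_def by auto

lemma connected_on_insert_pendant:
  assumes con: "connected_on V E" and i: "i \<in> V"
  shows "connected_on (insert m V) (E \<union> {(i, m), (m, i)})"
  unfolding connected_on_def
proof (intro ballI)
  let ?R = "(E \<union> {(i, m), (m, i)}) \<inter> insert m V \<times> insert m V"
  have old: "(u, v) \<in> ?R\<^sup>*" if "u \<in> V" "v \<in> V" for u v
    using con that rtrancl_mono[of "E \<inter> V \<times> V" ?R] unfolding connected_on_def by blast
  have new: "(i, m) \<in> ?R" "(m, i) \<in> ?R"
    using i by auto
  fix u v
  assume "u \<in> insert m V" "v \<in> insert m V"
  then have "(u, i) \<in> ?R\<^sup>*" "(i, v) \<in> ?R\<^sup>*"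
    using old[OF _ i] old[OF i] new by auto
  then show "(u, v) \<in> ?R\<^sup>*"
    by (rule rtrancl_trans)
qed

lemma is_tree_insert_pendant:
  assumes tree: "is_tree V E" and m: "m \<notin> V" and i: "i \<in> V"
  shows "is_tree (insert m V) (E \<union> {(i, m), (m, i)})"
proof -
  have V: "finite V" "V \<noteq> {}" and E: "E \<subseteq> V \<times> V" "sym E" "irrefl E"
    and con: "connected_on V E" and card_E: "card E = 2 * (card V - 1)"
    using tree unfolding is_tree_def by auto
  have "finite E"
    using E(1) V by (meson finite_SigmaI finite_subset)
  moreover have "(i, m) \<notin> E" "(m, i) \<notin> E" "i \<noteq> m"
    using E(1) m i by auto
  ultimately have "card (E \<union> {(i, m), (m, i)}) = card E + 2"
    by auto
  moreover have "card (insert m V) = card V + 1" "card V \<ge> 1"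
    using V m by (auto simp: Suc_leI card_gt_0_iff)
  moreover have "sym (E \<union> {(i, m), (m, i)})" "irrefl (E \<union> {(i, m), (m, i)})"
    using E i m unfolding sym_def irrefl_def by auto
  ultimately show ?thesis
    using V E(1) i card_E connected_on_insert_pendant[OF con i] unfolding is_tree_def by auto
qed

lemma essential_flip_insert_pendant:
  assumes flip: "essential_flip V E D1 D2" and m: "m \<notin> V" and i: "i \<in> V"
  shows "essential_flip (insert m V) (E \<union> {(i, m), (m, i)}) (insert (i, m) D1) (insert (i, m) D2)"
proof -
  let ?V = "insert m V" and ?E = "E \<union> {(i, m), (m, i)}"
  have tree: "is_tree V E" and dags: "dag V D1" "dag V D2" and skels: "skel D1 = E" "skel D2 = E"
    and not_equiv: "\<not> markov_equiv D1 D2"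
    using flip unfolding essential_flip_def by auto
  have D: "D1 \<subseteq> V \<times> V" "D2 \<subseteq> V \<times> V" and E: "E \<subseteq> V \<times> V" "irrefl E" "connected_on V E"
    using dags tree unfolding dag_def is_tree_def by auto
  define S where "S = span V E (Delta V E D1 D2)"
  define S' where "S' = span ?V ?E (Delta ?V ?E (insert (i, m) D1) (insert (i, m) D2))"
  have "S' \<subseteq> S"
    unfolding S'_def S_def
    by (rule span_insert_pendant_subset[OF m Delta_insert_pendant_subset[OF D E(1,2) m i]])
  moreover have "S \<subseteq> V"
    unfolding S_def by (rule span_subset[OF E(3)]) (auto simp: Delta_def)
  ultimately have S': "a \<in> S" "a \<in> V" if "a \<in> S'" for a
    using that by auto
  have flip_S: "\<forall>a\<in>S. \<forall>b\<in>S. (a, b) \<in> D1 \<longrightarrow> (a, b) \<in> essential V D1"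
    "\<forall>a\<in>S. \<forall>b\<in>S. (a, b) \<in> D2 \<longrightarrow> (a, b) \<in> essential V D2"
    "\<forall>a\<in>S. \<forall>b\<in>S. (a, b) \<in> E \<longrightarrow> ((a, b) \<in> essential V D1 \<longleftrightarrow> (a, b) \<notin> essential V D2)"
    using flip unfolding essential_flip_def S_def Let_def by auto
  show ?thesis
    unfolding essential_flip_def Let_def S'_def[symmetric]
  proof (intro conjI ballI impI)
    show "is_tree ?V ?E"
      using is_tree_insert_pendant[OF tree m i] .
    show "dag ?V (insert (i, m) D1)" "dag ?V (insert (i, m) D2)"
      using dag_insert_pendant[OF _ m i] dags by auto
    show "skel (insert (i, m) D1) = ?E" "skel (insert (i, m) D2) = ?E"
      using skels by (auto simp: skel_insert)
    show "\<not> markov_equiv (insert (i, m) D1) (insert (i, m) D2)"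
      using not_equiv markov_equiv_insert_pendant_iff[OF D m i] by simp
  next
    fix a b
    assume "a \<in> S'" "b \<in> S'"
    then have old: "a \<in> S" "b \<in> S" "a \<in> V" "b \<in> V" "b \<noteq> m" "a \<noteq> m"
      using S' m by auto
    note ess = essential_insert_pendant_iff[OF D(1) m i old(3,4)]
      essential_insert_pendant_iff[OF D(2) m i old(3,4)]
    show "(a, b) \<in> essential ?V (insert (i, m) D1)" if "(a, b) \<in> insert (i, m) D1"
      using that flip_S(1) old ess by auto
    show "(a, b) \<in> essential ?V (insert (i, m) D2)" if "(a, b) \<in> insert (i, m) D2"
      using that flip_S(2) old ess by auto
    show "(a, b) \<in> essential ?V (insert (i, m) D1) \<longleftrightarrow> (a, b) \<notin> essential ?V (insert (i, m) D2)"
      if "(a, b) \<in> ?E"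
      using that flip_S(3) old ess by auto
  qed
qed

lemma reverse_on_insert_notin:
  "b \<notin> W \<Longrightarrow> reverse_on W (insert (a, b) D) = insert (a, b) (reverse_on W D)"
  unfolding reverse_on_def by auto

theorem mainTheorem3:
  fixes n i :: nat and E D :: "(nat \<times> nat) set" and W :: "nat set"
  assumes "is_tree {1..n} E"
    and "dag {1..n} D" and "skel D = E"
    and "i \<in> {1..n}" and "card (ne E i) \<ge> 2"
    and "is_subtree {1..n} E W"
    and "essential_flip {1..n} E D (reverse_on W D)"
  shows "essential_flip {1..n+1} (E \<union> {(i, n+1), (n+1, i)})
           (D \<union> {(i, n+1)}) (reverse_on W (D \<union> {(i, n+1)}))"
proof -
  have new: "n + 1 \<notin> {1..n}"
    by simp
  have "{1..n + 1} = insert (n + 1) {1..n}"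
    by auto
  moreover have "n + 1 \<notin> W"
    using assms(6) new unfolding is_subtree_def by blast
  ultimately show ?thesis
    using essential_flip_insert_pendant[OF assms(7) new assms(4)]
    by (simp add: reverse_on_insert_notin)
qed

end
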